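(* Let $\mathcal{L}$ be a set of graphs. For all graphs $G_1,G_2$: $G_1\cong^{\mathbf{G}}_{\mathcal{L}}G_2$ iff $G_1$ and $G_2$ have the same sort and, for all graphs $G$, all finite permutations $\alpha$ of $\mathbb{S}$ and all finite $\tau\subseteq\mathbb{S}$, $\mathsf{rename}_\alpha(\mathsf{restrict}_\tau(G_1\parallel G))\in\mathcal{L}\iff\mathsf{rename}_\alpha(\mathsf{restrict}_\tau(G_2\parallel G))\in\mathcal{L}$.
   Context: Graphs over a countably infinite set $\mathbb{S}$ of source labels and a set $\mathbb{A}$ of edge labels: isomorphism classes of finite $\mathbb{A}$-labelled hypergraphs with an injective map $\xi$ from a finite sort $\tau\subseteq\mathbb{S}$ into the vertices. The HR algebra $\mathbf{G}$: sorts are finite subsets of $\mathbb{S}$; operations $\mathbf{0}_\tau$ (one $s$-source per $s\in\tau$), $\mathbf{a}_{(s_1,\ldots,s_{\#a})}$ (single $a$-edge on these sources), $\mathsf{restrict}_\tau$ (on sort $\tau'$, removes source labels in $\tau'\setminus\tau$, keeping vertices; result sort $\tau\cap\tau'$), $\mathsf{rename}_\alpha$ ($\alpha$ finite permutation; source map becomes $\xi\circ\alpha$, sort $\alpha^{-1}(\tau)$), $\parallel$ (disjoint union fusing the two $s$-sources for each common label $s$). The syntactic congruence $\cong^{\mathbf{A}}_{\mathcal{L}}$ of a set $\mathcal{L}$ in an algebra $\mathbf{A}$ relates $a,b$ iff they have the same sort and for every first-order term $t(x,y_1,\ldots,y_k)$ over the signature of $\mathbf{A}$ and all elements $c_1,\ldots,c_k$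 of matching sorts, $t^{\mathbf{A}}(a,\bar c)\in\mathcal{L}\iff t^{\mathbf{A}}(b,\bar c)\in\mathcal{L}$. *)

theory Defs
  imports Main
begin

text \<open>Source labels: the countably infinite set S is taken to be nat.
  Concrete graphs have vertices and edges drawn from nat; the elements of
  the HR algebra are isomorphism classes of well-formed concrete graphs.\<close>

record 'a hgraph =
  verts :: "nat set"
  edges :: "nat set"
  lab   :: "nat \<Rightarrow> 'a"
  att   :: "nat \<Rightarrow> nat list"
  srt   :: "nat set"
  src   :: "nat \<Rightarrow> nat"

definition wf_graph :: "('a \<Rightarrow> nat) \<Rightarrow> 'a hgraph \<Rightarrow> bool" where
  "wf_graph ar G \<longleftrightarrow>
     finite (verts G) \<and> finite (edges G) \<and>
     (\<forall>e\<in>edges G. set (att G e) \<subseteq> verts G \<and> length (att G e) = ar (lab G e)) \<and>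
     finite (srt G) \<and> inj_on (src G) (srt G) \<and> src G ` srt G \<subseteq> verts G"

definition iso_graph :: "'a hgraph \<Rightarrow> 'a hgraph \<Rightarrow> bool" where
  "iso_graph G H \<longleftrightarrow> srt G = srt H \<and>
     (\<exists>fv fe. bij_betw fv (verts G) (verts H) \<and> bij_betw fe (edges G) (edges H) \<and>
        (\<forall>e\<in>edges G. lab H (fe e) = lab G e \<and> att H (fe e) = map fv (att G e)) \<and>
        (\<forall>s\<in>srt G. src H s = fv (src G s)))"

definition cls :: "('a \<Rightarrow> nat) \<Rightarrow> 'a hgraph \<Rightarrow> 'a hgraph set" where
  "cls ar G = {H. wf_graph ar H \<and> iso_graph G H}"

definition fin_perm :: "(nat \<Rightarrow> nat) \<Rightarrow> bool" where
  "fin_perm \<alpha> \<longleftrightarrow> bij \<alpha> \<and> finite {s. \<alpha> s \<noteq> s}"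

definition zero_g :: "nat set \<Rightarrow> 'a hgraph" where
  "zero_g \<tau> = \<lparr>verts = \<tau>, edges = {}, lab = (\<lambda>_. undefined), att = (\<lambda>_. []),
               srt = \<tau>, src = id\<rparr>"

definition edge_g :: "'a \<Rightarrow> nat list \<Rightarrow> 'a hgraph" where
  "edge_g a ss = \<lparr>verts = set ss, edges = {0}, lab = (\<lambda>_. a), att = (\<lambda>_. ss),
                  srt = set ss, src = id\<rparr>"

definition restrict_g :: "nat set \<Rightarrow> 'a hgraph \<Rightarrow> 'a hgraph" where
  "restrict_g \<tau> G = G\<lparr>srt := srt G \<inter> \<tau>\<rparr>"

definition rename_g :: "(nat \<Rightarrow> nat) \<Rightarrow> 'a hgraph \<Rightarrow> 'a hgraph" where
  "rename_g \<alpha> G = G\<lparr>srt := \<alpha> -` srt G, src := src G \<circ> \<alpha>\<rparr>"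

text \<open>Parallel composition: G's vertices/edges are encoded as even numbers, H's as odd
  numbers, except that the s-source of H is identified with the s-source of G for every
  common source label s.\<close>
definition par_vmap :: "'a hgraph \<Rightarrow> 'a hgraph \<Rightarrow> nat \<Rightarrow> nat" where
  "par_vmap G H v =
     (if v \<in> src H ` (srt G \<inter> srt H) then 2 * src G (inv_into (srt H) (src H) v)
      else 2 * v + 1)"

definition par_g :: "'a hgraph \<Rightarrow> 'a hgraph \<Rightarrow> 'a hgraph" where
  "par_g G H =
     \<lparr>verts = (\<lambda>v. 2 * v) ` verts G \<union> par_vmap G H ` verts H,
      edges = (\<lambda>e. 2 * e) ` edges G \<union> (\<lambda>e. 2 * e + 1) ` edges H,
      lab = (\<lambda>e. if even e then lab G (e div 2) else lab H (e div 2)),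
      att = (\<lambda>e. if even e then map (\<lambda>v. 2 * v) (att G (e div 2))
                 else map (par_vmap G H) (att H (e div 2))),
      srt = srt G \<union> srt H,
      src = (\<lambda>s. if s \<in> srt G then 2 * src G s else par_vmap G H (src H s))\<rparr>"

datatype 'a hrterm =
    Var nat
  | Zero "nat set"
  | Edge 'a "nat list"
  | Restrict "nat set" "'a hrterm"
  | Rename "nat \<Rightarrow> nat" "'a hrterm"
  | Par "'a hrterm" "'a hrterm"

fun wf_term :: "('a \<Rightarrow> nat) \<Rightarrow> 'a hrterm \<Rightarrow> bool" where
  "wf_term ar (Var i) = True"
| "wf_term ar (Zero \<tau>) = finite \<tau>"
| "wf_term ar (Edge a ss) = (length ss = ar a)"
| "wf_term ar (Restrict \<tau> t) = (finite \<tau> \<and> wf_term ar t)"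
| "wf_term ar (Rename \<alpha> t) = (fin_perm \<alpha> \<and> wf_term ar t)"
| "wf_term ar (Par t u) = (wf_term ar t \<and> wf_term ar u)"

fun eval_term :: "(nat \<Rightarrow> 'a hgraph) \<Rightarrow> 'a hrterm \<Rightarrow> 'a hgraph" where
  "eval_term \<rho> (Var i) = \<rho> i"
| "eval_term \<rho> (Zero \<tau>) = zero_g \<tau>"
| "eval_term \<rho> (Edge a ss) = edge_g a ss"
| "eval_term \<rho> (Restrict \<tau> t) = restrict_g \<tau> (eval_term \<rho> t)"
| "eval_term \<rho> (Rename \<alpha> t) = rename_g \<alpha> (eval_term \<rho> t)"
| "eval_term \<rho> (Par t u) = par_g (eval_term \<rho> t) (eval_term \<rho> u)"

text \<open>Variable 0 plays the role of x; the other variables are the parameters y_i, which are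
  assigned arbitrary graphs (the many-sorted operations are indexed by the argument sorts,
  so every assignment is well-sorted).\<close>
definition synt_cong :: "('a \<Rightarrow> nat) \<Rightarrow> 'a hgraph set set \<Rightarrow> 'a hgraph \<Rightarrow> 'a hgraph \<Rightarrow> bool" where
  "synt_cong ar L G1 G2 \<longleftrightarrow> srt G1 = srt G2 \<and>
     (\<forall>t \<rho>. wf_term ar t \<longrightarrow> (\<forall>i. wf_graph ar (\<rho> i)) \<longrightarrow>
        (cls ar (eval_term (\<rho>(0 := G1)) t) \<in> L \<longleftrightarrow> cls ar (eval_term (\<rho>(0 := G2)) t) \<in> L))"

end

theory Submission
  imports Defs
begin

(* Call X and Y context-equivalent if they have the same sort and no basic context
   rename_\<alpha> (restrict_\<tau> (_ || G)) separates them with respect to L. The syntactic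
   congruence implies this, since a basic context is a term. Conversely, context equivalence is
   preserved by every HR operation, because an operation applied before a basic context can be
   absorbed into another basic context: (X || H) || G is isomorphic to X || (H || G),
   rename_\<beta> X || G to rename_\<beta> (X || rename_(inv \<beta>) G), and restrict_\<sigma> X || G arises from
   X || G' where G' is G with its source labels outside \<sigma> swapped to fresh ones. Replacing the
   variable of a term by G2 one occurrence at a time, and finally using the trivial context
   (G = 0_{}, \<alpha> = id, \<tau> the sort), yields the syntactic congruence.

   Since || is defined by an explicit encoding of vertices and edges, it is handled up to
   isomorphism: any two gluings of the same graphs along their common source labels are
   isomorphic, and the encoded || is one of them. *)

lemma wf_graphD:
  assumes "wf_graph ar G"
  shows "finite (verts G)" "finite (edges G)" "\<And>e. e \<in> edges G \<Longrightarrow> set (att G e) \<subseteq> verts G"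
    "\<And>e. e \<in> edges G \<Longrightarrow> length (att G e) = ar (lab G e)" "finite (srt G)"
    "inj_on (src G) (srt G)" "\<And>s. s \<in> srt G \<Longrightarrow> src G s \<in> verts G"
  using assms unfolding wf_graph_def by auto

lemma restrict_g_simps [simp]:
  "verts (restrict_g \<sigma> G) = verts G" "edges (restrict_g \<sigma> G) = edges G"
  "lab (restrict_g \<sigma> G) = lab G" "att (restrict_g \<sigma> G) = att G"
  "srt (restrict_g \<sigma> G) = srt G \<inter> \<sigma>" "src (restrict_g \<sigma> G) = src G"
  unfolding restrict_g_def by simp_all

lemma rename_g_simps [simp]:
  "verts (rename_g \<beta> G) = verts G" "edges (rename_g \<beta> G) = edges G"
  "lab (rename_g \<beta> G) = lab G" "att (rename_g \<beta> G) = att G"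
  "srt (rename_g \<beta> G) = \<beta> -` srt G" "src (rename_g \<beta> G) = src G \<circ> \<beta>"
  unfolding rename_g_def by simp_all

lemma srt_par_g [simp]: "srt (par_g G H) = srt G \<union> srt H"
  unfolding par_g_def by simp

lemma restrict_restrict_g: "restrict_g \<tau> (restrict_g \<sigma> G) = restrict_g (\<sigma> \<inter> \<tau>) G"
  unfolding restrict_g_def by (simp add: Int_assoc)

lemma rename_rename_g: "rename_g \<alpha> (rename_g \<beta> G) = rename_g (\<beta> \<circ> \<alpha>) G"
  unfolding rename_g_def by (simp add: vimage_comp comp_assoc)

lemma rename_id_g: "rename_g id G = G"
  unfolding rename_g_def by simp

lemma rename_restrict_rename_g:
  assumes "bij \<beta>"
  shows "rename_g \<alpha> (restrict_g \<tau> (rename_g \<beta> G)) = rename_g (\<beta> \<circ> \<alpha>) (restrict_g (\<beta> ` \<tau>) G)"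
proof -
  have "(\<beta> \<circ> \<alpha>) -` (srt G \<inter> \<beta> ` \<tau>) = \<alpha> -` (\<beta> -` srt G \<inter> \<tau>)"
    using assms by (auto simp: bij_def inj_on_def) metis
  then show ?thesis unfolding rename_g_def restrict_g_def by (simp add: comp_assoc)
qed

lemma wf_graph_restrict_g: "wf_graph ar G \<Longrightarrow> wf_graph ar (restrict_g \<tau> G)"
  unfolding wf_graph_def restrict_g_def by (auto intro: inj_on_subset)

lemma wf_graph_rename_g:
  assumes "wf_graph ar G" "bij \<beta>"
  shows "wf_graph ar (rename_g \<beta> G)"
proof -
  have "inj \<beta>" using assms(2) bij_is_inj by blast
  then have "finite (\<beta> -` srt G)" "inj_on (src G \<circ> \<beta>) (\<beta> -` srt G)"
    using assms(1) unfolding wf_graph_def by (auto intro: finite_vimageI simp: inj_on_def)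
  then show ?thesis using assms(1) unfolding wf_graph_def by auto
qed

lemma wf_graph_zero_g: "finite \<tau> \<Longrightarrow> wf_graph ar (zero_g \<tau>)"
  unfolding wf_graph_def zero_g_def by auto

lemma wf_graph_edge_g: "length ss = ar a \<Longrightarrow> wf_graph ar (edge_g a ss)"
  unfolding wf_graph_def edge_g_def by auto

lemma iso_graph_restrict_g: "iso_graph G H \<Longrightarrow> iso_graph (restrict_g \<tau> G) (restrict_g \<tau> H)"
  unfolding iso_graph_def restrict_g_def by simp blast

lemma iso_graph_rename_g: "iso_graph G H \<Longrightarrow> iso_graph (rename_g \<alpha> G) (rename_g \<alpha> H)"
  unfolding iso_graph_def rename_g_def by simp blast

lemma iso_graph_trans:
  assumes "iso_graph G H" "iso_graph H K"
  shows "iso_graph G K"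
proof -
  obtain fv fe where f: "bij_betw fv (verts G) (verts H)" "bij_betw fe (edges G) (edges H)"
    "\<forall>e\<in>edges G. lab H (fe e) = lab G e \<and> att H (fe e) = map fv (att G e)"
    "\<forall>s\<in>srt G. src H s = fv (src G s)" "srt G = srt H"
    using assms(1) unfolding iso_graph_def by blast
  obtain gv ge where g: "bij_betw gv (verts H) (verts K)" "bij_betw ge (edges H) (edges K)"
    "\<forall>e\<in>edges H. lab K (ge e) = lab H e \<and> att K (ge e) = map gv (att H e)"
    "\<forall>s\<in>srt H. src K s = gv (src H s)" "srt H = srt K"
    using assms(2) unfolding iso_graph_def by blast
  have "\<forall>e\<in>edges G. lab K ((ge \<circ> fe) e) = lab G e \<and> att K ((ge \<circ> fe) e) = map (gv \<circ> fv) (att G e)"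
    using f(2,3) g(3) by (auto dest: bij_betwE)
  moreover have "\<forall>s\<in>srt G. src K s = (gv \<circ> fv) (src G s)" using f(4,5) g(4) by auto
  moreover have "bij_betw (gv \<circ> fv) (verts G) (verts K)" "bij_betw (ge \<circ> fe) (edges G) (edges K)"
    using f g bij_betw_trans by blast+
  ultimately show ?thesis unfolding iso_graph_def using f(5) g(5) by blast
qed

lemma iso_graph_sym:
  assumes "iso_graph G H" "wf_graph ar G"
  shows "iso_graph H G"
proof -
  obtain fv fe where f: "bij_betw fv (verts G) (verts H)" "bij_betw fe (edges G) (edges H)"
    "\<forall>e\<in>edges G. lab H (fe e) = lab G e \<and> att H (fe e) = map fv (att G e)"
    "\<forall>s\<in>srt G. src H s = fv (src G s)" "srt G = srt H"
    using assms(1) unfolding iso_graph_def by blast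
  define gv where "gv = inv_into (verts G) fv"
  define ge where "ge = inv_into (edges G) fe"
  have gv_fv: "gv (fv v) = v" if "v \<in> verts G" for v
    unfolding gv_def using f(1) that by (simp add: bij_betw_imp_inj_on)
  have ge_fe: "ge (fe e) = e" if "e \<in> edges G" for e
    unfolding ge_def using f(2) that by (simp add: bij_betw_imp_inj_on)
  have "\<forall>e\<in>edges H. lab G (ge e) = lab H e \<and> att G (ge e) = map gv (att H e)"
  proof
    fix e assume "e \<in> edges H"
    then obtain e' where e': "e' \<in> edges G" "e = fe e'" using f(2) bij_betw_imp_surj_on by blast
    have "map gv (map fv (att G e')) = att G e'"
      using wf_graphD(3)[OF assms(2) e'(1)] gv_fv by (simp add: map_idI subset_iff)
    then show "lab G (ge e) = lab H e \<and> att G (ge e) = map gv (att H e)"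
      using f(3) e' ge_fe by simp
  qed
  moreover have "\<forall>s\<in>srt H. src G s = gv (src H s)"
    using f(4,5) gv_fv wf_graphD(7)[OF assms(2)] by simp
  moreover have "bij_betw gv (verts H) (verts G)" "bij_betw ge (edges H) (edges G)"
    unfolding gv_def ge_def using f(1,2) bij_betw_inv_into by blast+
  ultimately show ?thesis unfolding iso_graph_def using f(5) by blast
qed

lemma cls_eq_if_iso_graph:
  assumes "iso_graph G H" "wf_graph ar G"
  shows "cls ar G = cls ar H"
  using assms iso_graph_sym iso_graph_trans unfolding cls_def by blast

lemma fin_perm_bij: "fin_perm \<alpha> \<Longrightarrow> bij \<alpha>"
  unfolding fin_perm_def by blast

lemma fin_perm_id: "fin_perm id"
  unfolding fin_perm_def by simp

lemma fin_perm_comp: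
  assumes "fin_perm \<beta>" "fin_perm \<alpha>"
  shows "fin_perm (\<beta> \<circ> \<alpha>)"
proof -
  have "{s. (\<beta> \<circ> \<alpha>) s \<noteq> s} \<subseteq> {s. \<alpha> s \<noteq> s} \<union> \<alpha> -` {t. \<beta> t \<noteq> t}" by auto
  moreover have "finite (\<alpha> -` {t. \<beta> t \<noteq> t})"
    using assms finite_vimageI[OF _ bij_is_inj] unfolding fin_perm_def by blast
  ultimately show ?thesis
    using assms unfolding fin_perm_def by (meson bij_comp finite_UnI finite_subset)
qed

lemma fin_perm_involution_avoiding:
  fixes S D :: "nat set"
  assumes "finite S" "D \<subseteq> S"
  obtains \<beta> where "fin_perm \<beta>" "\<And>s. \<beta> (\<beta> s) = s" "\<And>s. s \<in> S - D \<Longrightarrow> \<beta> s = s"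
    "\<And>s. s \<in> D \<Longrightarrow> \<beta> s \<notin> S"
proof -
  define N where "N = Suc (Max (insert 0 S))"
  have below_N: "s < N" if "s \<in> S" for s
    unfolding N_def using assms(1) that by (simp add: le_imp_less_Suc)
  define \<beta> where "\<beta> s = (if s \<in> D then s + N else if N \<le> s \<and> s - N \<in> D then s - N else s)" for s
  have D_below_N: "s \<in> D \<Longrightarrow> s < N" for s using assms(2) below_N by blast
  have involution: "\<beta> (\<beta> s) = s" for s
    unfolding \<beta>_def using D_below_N[of "s + N"] D_below_N[of s] by auto
  then have "bij \<beta>" by (metis o_bij comp_apply id_apply fun_eq_iff)
  moreover have "{s. \<beta> s \<noteq> s} \<subseteq> D \<union> (\<lambda>d. d + N) ` D"
  proof
    fix s assume "s \<in> {s. \<beta> s \<noteq> s}"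
    then have "s \<in> D \<or> (N \<le> s \<and> s - N \<in> D)" unfolding \<beta>_def by (auto split: if_splits)
    then show "s \<in> D \<union> (\<lambda>d. d + N) ` D" by (auto simp: image_iff) (metis le_add_diff_inverse2)
  qed
  moreover have "finite D" using assms finite_subset by blast
  ultimately have "fin_perm \<beta>" unfolding fin_perm_def by (meson finite_UnI finite_imageI finite_subset)
  moreover have "\<beta> s = s" if "s \<in> S - D" for s
    using that below_N[of s] unfolding \<beta>_def by auto
  moreover have "\<beta> s \<notin> S" if "s \<in> D" for s
    using that below_N[of "s + N"] unfolding \<beta>_def by auto
  ultimately show ?thesis using that involution by blast
qed

section \<open>Gluings\<close>

definition union_along ::
  "'c set \<Rightarrow> ('a \<Rightarrow> 'c) \<Rightarrow> 'a set \<Rightarrow> ('b \<Rightarrow> 'c) \<Rightarrow> 'b set \<Rightarrow> ('a \<Rightarrow> 'b \<Rightarrow> bool) \<Rightarrow> bool" where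
  "union_along C f A g B R \<longleftrightarrow> C = f ` A \<union> g ` B \<and> inj_on f A \<and> inj_on g B \<and>
     (\<forall>a\<in>A. \<forall>b\<in>B. f a = g b \<longleftrightarrow> R a b)"

definition copair_on ::
  "'a set \<Rightarrow> 'b set \<Rightarrow> ('a \<Rightarrow> 'c) \<Rightarrow> ('b \<Rightarrow> 'c) \<Rightarrow> ('a \<Rightarrow> 'd) \<Rightarrow> ('b \<Rightarrow> 'd) \<Rightarrow> 'c \<Rightarrow> 'd" where
  "copair_on A B f g u v c = (if c \<in> f ` A then u (inv_into A f c) else v (inv_into B g c))"

lemma union_alongD:
  assumes "union_along C f A g B R"
  shows "C = f ` A \<union> g ` B" "inj_on f A" "inj_on g B"
    "\<And>a b. a \<in> A \<Longrightarrow> b \<in> B \<Longrightarrow> f a = g b \<longleftrightarrow> R a b"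
  using assms unfolding union_along_def by blast+

lemma union_along_sym: "union_along C f A g B R \<Longrightarrow> union_along C g B f A (\<lambda>b a. R a b)"
  unfolding union_along_def by (simp add: Un_commute) metis

lemma copair_on_left: "inj_on f A \<Longrightarrow> a \<in> A \<Longrightarrow> copair_on A B f g u v (f a) = u a"
  unfolding copair_on_def by simp

lemma copair_on_right:
  assumes "union_along C f A g B R" "b \<in> B" "\<And>a. a \<in> A \<Longrightarrow> R a b \<Longrightarrow> u a = v b"
  shows "copair_on A B f g u v (g b) = v b"
proof (cases "g b \<in> f ` A")
  case True
  then obtain a where "a \<in> A" "g b = f a" by blast
  then show ?thesis
    using assms union_alongD[OF assms(1)] copair_on_left[of f A] by metis
next
  case False
  then show ?thesis
    unfolding copair_on_def using union_alongD(3)[OF assms(1)] assms(2) by simp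
qed

lemma bij_betw_copair_on:
  assumes C: "union_along C f A g B R" and C': "union_along C' f' A g' B R"
  shows "bij_betw (copair_on A B f g f' g') C C'"
proof -
  have copair_on_simps:
    "\<And>a. a \<in> A \<Longrightarrow> copair_on A B f g f' g' (f a) = f' a"
    "\<And>a. a \<in> A \<Longrightarrow> copair_on A B f' g' f g (f' a) = f a"
    "\<And>b. b \<in> B \<Longrightarrow> copair_on A B f g f' g' (g b) = g' b"
    "\<And>b. b \<in> B \<Longrightarrow> copair_on A B f' g' f g (g' b) = g b"
    using union_alongD[OF C] union_alongD[OF C']
    by (auto intro!: copair_on_left copair_on_right[OF C] copair_on_right[OF C'])
  have "copair_on A B f' g' f g (copair_on A B f g f' g' c) = c" if "c \<in> C" for c
    using that copair_on_simps union_alongD(1)[OF C] by auto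
  then show ?thesis
    unfolding bij_betw_def using copair_on_simps union_alongD(1)[OF C] union_alongD(1)[OF C']
    by (auto intro: inj_on_inverseI simp: image_Un image_image cong: image_cong)
qed

lemma union_along_assoc:
  assumes K: "union_along K jX X jP P R\<^sub>1" and P: "union_along P kH H kG G R\<^sub>2"
    and A: "union_along A iX X iH H R\<^sub>3"
    and R\<^sub>1\<^sub>3: "\<And>x h. x \<in> X \<Longrightarrow> h \<in> H \<Longrightarrow> R\<^sub>1 x (kH h) \<longleftrightarrow> R\<^sub>3 x h"
    and RX: "\<And>x g. x \<in> X \<Longrightarrow> g \<in> G \<Longrightarrow> R (iX x) g \<longleftrightarrow> R\<^sub>1 x (kG g)"
    and RH: "\<And>h g. h \<in> H \<Longrightarrow> g \<in> G \<Longrightarrow> R (iH h) g \<longleftrightarrow> R\<^sub>2 h g"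
  shows "union_along K (copair_on X H iX iH jX (jP \<circ> kH)) A (jP \<circ> kG) G R"
proof -
  define u where "u = copair_on X H iX iH jX (jP \<circ> kH)"
  note K = union_alongD[OF K] and P = union_alongD[OF P] and A = union_alongD[OF A]
  have kH: "kH h \<in> P" if "h \<in> H" for h using that P(1) by blast
  have kG: "kG g \<in> P" if "g \<in> G" for g using that P(1) by blast
  have jX_eq_jP_kH: "jX x = jP (kH h) \<longleftrightarrow> iX x = iH h" if "x \<in> X" "h \<in> H" for x h
    using that K(4) A(4) R\<^sub>1\<^sub>3 kH by simp
  have u_iX: "u (iX x) = jX x" if "x \<in> X" for x
    unfolding u_def using copair_on_left[OF A(2) that] .
  have u_iH: "u (iH h) = jP (kH h)" if "h \<in> H" for h
    unfolding u_def using copair_on_right[OF assms(3) that, of jX "jP \<circ> kH"]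
    by (simp add: K(4) kH R\<^sub>1\<^sub>3 that)
  have "K = u ` A \<union> (jP \<circ> kG) ` G"
    using K(1) P(1) A(1) u_iX u_iH by (auto simp: image_Un image_image cong: image_cong)
  moreover have "inj_on u A"
  proof (rule inj_onI)
    fix a b assume "a \<in> A" "b \<in> A" "u a = u b"
    then show "a = b"
      using A(1) u_iX u_iH jX_eq_jP_kH K(2) inj_onD[OF K(3) _ kH kH] inj_onD[OF P(2)]
      by (auto dest: inj_onD) metis+
  qed
  moreover have "inj_on (jP \<circ> kG) G"
    using K(3) P(3) kG by (auto intro!: comp_inj_on simp: inj_on_def)
  moreover have "u a = (jP \<circ> kG) g \<longleftrightarrow> R a g" if "a \<in> A" "g \<in> G" for a g
    using that A(1) u_iX u_iH K(4) P(4) RX RH inj_on_eq_iff[OF K(3) kH kG] kG by auto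
  ultimately show ?thesis unfolding union_along_def u_def by blast
qed

definition shares_src :: "'a hgraph \<Rightarrow> 'a hgraph \<Rightarrow> nat \<Rightarrow> nat \<Rightarrow> bool" where
  "shares_src G H v w \<longleftrightarrow> (\<exists>s\<in>srt G \<inter> srt H. v = src G s \<and> w = src H s)"

definition is_gluing ::
  "'a hgraph \<Rightarrow> 'a hgraph \<Rightarrow> 'a hgraph \<Rightarrow> (nat \<Rightarrow> nat) \<Rightarrow> (nat \<Rightarrow> nat) \<Rightarrow> (nat \<Rightarrow> nat) \<Rightarrow> (nat \<Rightarrow> nat) \<Rightarrow> bool"
where
  "is_gluing K G H fG fH eG eH \<longleftrightarrow>
     union_along (verts K) fG (verts G) fH (verts H) (shares_src G H) \<and>
     union_along (edges K) eG (edges G) eH (edges H) (\<lambda>_ _. False) \<and>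
     (\<forall>e\<in>edges G. lab K (eG e) = lab G e \<and> att K (eG e) = map fG (att G e)) \<and>
     (\<forall>e\<in>edges H. lab K (eH e) = lab H e \<and> att K (eH e) = map fH (att H e)) \<and>
     srt K = srt G \<union> srt H \<and>
     (\<forall>s\<in>srt G. src K s = fG (src G s)) \<and> (\<forall>s\<in>srt H. src K s = fH (src H s))"

lemma is_gluingD:
  assumes "is_gluing K G H fG fH eG eH"
  shows "union_along (verts K) fG (verts G) fH (verts H) (shares_src G H)"
    "union_along (edges K) eG (edges G) eH (edges H) (\<lambda>_ _. False)"
    "\<And>e. e \<in> edges G \<Longrightarrow> lab K (eG e) = lab G e" "\<And>e. e \<in> edges G \<Longrightarrow> att K (eG e) = map fG (att G e)"
    "\<And>e. e \<in> edges H \<Longrightarrow> lab K (eH e) = lab H e" "\<And>e. e \<in> edges H \<Longrightarrow> att K (eH e) = map fH (att H e)"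
    "srt K = srt G \<union> srt H"
    "\<And>s. s \<in> srt G \<Longrightarrow> src K s = fG (src G s)" "\<And>s. s \<in> srt H \<Longrightarrow> src K s = fH (src H s)"
  using assms unfolding is_gluing_def by simp_all

lemma is_gluing_sym: "is_gluing K G H fG fH eG eH \<Longrightarrow> is_gluing K H G fH fG eH eG"
proof -
  have "(\<lambda>w v. shares_src G H v w) = shares_src H G"
    unfolding shares_src_def by (auto simp: fun_eq_iff)
  then show "is_gluing K G H fG fH eG eH \<Longrightarrow> is_gluing K H G fH fG eH eG"
    unfolding is_gluing_def using union_along_sym[of "verts K" fG "verts G" fH "verts H" "shares_src G H"]
      union_along_sym[of "edges K" eG "edges G" eH "edges H" "\<lambda>_ _. False"] by (auto simp: sup_commute)
qed

lemma wf_graph_is_gluing: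
  assumes K: "is_gluing K G H fG fH eG eH" and "wf_graph ar G" "wf_graph ar H"
  shows "wf_graph ar K"
proof -
  note V = union_alongD[OF is_gluingD(1)[OF K]] and E = union_alongD[OF is_gluingD(2)[OF K]]
  note K = is_gluingD[OF K] and G = wf_graphD[OF assms(2)] and H = wf_graphD[OF assms(3)]
  have "set (att K e) \<subseteq> verts K \<and> length (att K e) = ar (lab K e)" if "e \<in> edges K" for e
  proof -
    from that consider e' where "e' \<in> edges G" "e = eG e'" | e' where "e' \<in> edges H" "e = eH e'"
      using E(1) by blast
    then show ?thesis
      by cases (use G(3,4) H(3,4) K(3-6) V(1) in fastforce)+
  qed
  moreover have "inj_on (src K) (srt K)"
  proof (rule inj_onI)
    have mixed: "s = t" if "s \<in> srt G" "t \<in> srt H" "src K s = src K t" for s t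
    proof -
      have "shares_src G H (src G s) (src H t)" using that V(4) G(7) H(7) K(8,9) by simp
      then show ?thesis using that G(6) H(6) unfolding shares_src_def by (auto dest: inj_onD)
    qed
    fix s t assume "s \<in> srt K" "t \<in> srt K" "src K s = src K t"
    then consider "s \<in> srt G" "t \<in> srt G" | "s \<in> srt H" "t \<in> srt H"
      | "s \<in> srt G" "t \<in> srt H" | "s \<in> srt H" "t \<in> srt G"
      using K(7) by blast
    then show "s = t"
    proof cases
      case 1 then show ?thesis
        using \<open>src K s = src K t\<close> K(8) V(2) G(6,7) by (metis inj_onD)
    next
      case 2 then show ?thesis
        using \<open>src K s = src K t\<close> K(9) V(3) H(6,7) by (metis inj_onD)
    qed (use mixed \<open>src K s = src K t\<close> in metis)+
  qed
  moreover have "src K ` srt K \<subseteq> verts K" using K(7-9) V(1) G(7) H(7) by auto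
  ultimately show ?thesis
    unfolding wf_graph_def using G(1,2,5) H(1,2,5) V(1) E(1) K(7) by auto
qed

lemma is_gluing_par_g:
  assumes "wf_graph ar G" "wf_graph ar H"
  shows "is_gluing (par_g G H) G H (\<lambda>v. 2 * v) (par_vmap G H) (\<lambda>e. 2 * e) (\<lambda>e. 2 * e + 1)"
proof -
  note G = wf_graphD[OF assms(1)] and H = wf_graphD[OF assms(2)]
  let ?F = "src H ` (srt G \<inter> srt H)"
  have even_ne_odd: "2 * a \<noteq> 2 * b + (1::nat)" for a b by presburger
  have vmap_shared: "par_vmap G H (src H s) = 2 * src G s" if "s \<in> srt G \<inter> srt H" for s
    unfolding par_vmap_def using that H(6) by simp
  have vmap_other: "par_vmap G H w = 2 * w + 1" if "w \<notin> ?F" for w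
    unfolding par_vmap_def using that by simp
  have fusion: "2 * v = par_vmap G H w \<longleftrightarrow> shares_src G H v w" for v w
  proof (cases "w \<in> ?F")
    case True
    then obtain s where s: "s \<in> srt G \<inter> srt H" "w = src H s" by blast
    then have "shares_src G H v w \<longleftrightarrow> v = src G s"
      unfolding shares_src_def using H(6) by (auto dest: inj_onD)
    then show ?thesis using vmap_shared s by simp
  next
    case False
    then show ?thesis unfolding shares_src_def using vmap_other even_ne_odd by auto
  qed
  have "inj_on (par_vmap G H) (verts H)"
  proof (rule inj_onI)
    fix v w assume vw: "par_vmap G H v = par_vmap G H w"
    show "v = w"
    proof (cases "v \<in> ?F"; cases "w \<in> ?F")
      assume "v \<in> ?F" "w \<in> ?F"
      then show ?thesis using vw vmap_shared G(6) by (auto dest: inj_onD)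
    next
      assume "v \<in> ?F" "w \<notin> ?F"
      then show ?thesis using vw vmap_shared vmap_other even_ne_odd by auto
    next
      assume "v \<notin> ?F" "w \<in> ?F"
      then show ?thesis using vw vmap_shared vmap_other even_ne_odd by (metis (no_types, lifting) imageE)
    next
      assume "v \<notin> ?F" "w \<notin> ?F"
      then show ?thesis using vw vmap_other by simp
    qed
  qed
  moreover have "inj_on (\<lambda>v::nat. 2 * v) X" "inj_on (\<lambda>v::nat. 2 * v + 1) X" for X
    by (auto simp: inj_on_def)
  ultimately have "union_along (verts (par_g G H)) (\<lambda>v. 2 * v) (verts G) (par_vmap G H) (verts H) (shares_src G H)"
    unfolding union_along_def par_g_def using fusion by simp
  moreover have "union_along (edges (par_g G H)) (\<lambda>e. 2 * e) (edges G) (\<lambda>e. 2 * e + 1) (edges H) (\<lambda>_ _. False)"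
    unfolding union_along_def par_g_def using even_ne_odd by (auto simp: inj_on_def)
  moreover have "src (par_g G H) s = par_vmap G H (src H s)" if "s \<in> srt H" for s
    using that vmap_shared unfolding par_g_def by simp
  ultimately show ?thesis unfolding is_gluing_def by (simp add: par_g_def)
qed

lemma wf_graph_par_g: "wf_graph ar G \<Longrightarrow> wf_graph ar H \<Longrightarrow> wf_graph ar (par_g G H)"
  using wf_graph_is_gluing is_gluing_par_g by blast

lemma iso_graph_is_gluing:
  assumes K: "is_gluing K G H fG fH eG eH" and K': "is_gluing K' G H fG' fH' eG' eH'"
    and "wf_graph ar G" "wf_graph ar H"
  shows "iso_graph K K'"
proof -
  define fv where "fv = copair_on (verts G) (verts H) fG fH fG' fH'"
  define fe where "fe = copair_on (edges G) (edges H) eG eH eG' eH'"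
  note VK = is_gluingD(1)[OF K] and EK = is_gluingD(2)[OF K] and K' = is_gluingD[OF K']
  note K = is_gluingD[OF K] and G = wf_graphD[OF assms(3)] and H = wf_graphD[OF assms(4)]
  have fv_fG: "fv (fG v) = fG' v" if "v \<in> verts G" for v
    unfolding fv_def using copair_on_left[OF union_alongD(2)[OF VK] that] .
  have fv_fH: "fv (fH w) = fH' w" if "w \<in> verts H" for w
    unfolding fv_def using copair_on_right[OF VK that] union_alongD(4)[OF K'(1)] that by auto
  have fe_eG: "fe (eG e) = eG' e" if "e \<in> edges G" for e
    unfolding fe_def using copair_on_left[OF union_alongD(2)[OF EK] that] .
  have fe_eH: "fe (eH e) = eH' e" if "e \<in> edges H" for e
    unfolding fe_def using copair_on_right[OF EK that] by auto
  have "\<forall>e\<in>edges K. lab K' (fe e) = lab K e \<and> att K' (fe e) = map fv (att K e)"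
  proof
    fix e assume "e \<in> edges K"
    then consider e' where "e' \<in> edges G" "e = eG e'" | e' where "e' \<in> edges H" "e = eH e'"
      using union_alongD(1)[OF EK] by blast
    then show "lab K' (fe e) = lab K e \<and> att K' (fe e) = map fv (att K e)"
      by cases (use G(3) H(3) K(3-6) K'(3-6) fe_eG fe_eH fv_fG fv_fH in \<open>auto simp: subset_iff\<close>)
  qed
  moreover have "\<forall>s\<in>srt K. src K' s = fv (src K s)"
    using K(7-9) K'(8,9) fv_fG fv_fH G(7) H(7) by auto
  ultimately show ?thesis
    unfolding iso_graph_def fv_def fe_def
    using bij_betw_copair_on[OF VK K'(1)] bij_betw_copair_on[OF EK K'(2)] K(7) K'(7) by blast
qed

lemma is_gluing_rename_g:
  assumes K: "is_gluing K G H fG fH eG eH" and "bij \<beta>"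
  shows "is_gluing (rename_g \<beta> K) (rename_g \<beta> G) (rename_g \<beta> H) fG fH eG eH"
proof -
  have "shares_src (rename_g \<beta> G) (rename_g \<beta> H) v w \<longleftrightarrow> shares_src G H v w" for v w
  proof
    assume "shares_src G H v w"
    then obtain s where "s \<in> srt G \<inter> srt H" "v = src G s" "w = src H s"
      unfolding shares_src_def by blast
    moreover obtain t where "s = \<beta> t" using \<open>bij \<beta>\<close> by (metis bij_pointE)
    ultimately show "shares_src (rename_g \<beta> G) (rename_g \<beta> H) v w"
      unfolding shares_src_def by auto
  qed (auto simp: shares_src_def)
  then have "shares_src (rename_g \<beta> G) (rename_g \<beta> H) = shares_src G H" by blast
  then show ?thesis using K unfolding is_gluing_def by simp
qed

lemma is_gluing_restrict_g:
  assumes K: "is_gluing K G (rename_g \<beta> H) fG fH eG eH" and involution: "\<And>s. \<beta> (\<beta> s) = s"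
    and fixed_on_\<sigma>: "\<And>s. s \<in> srt G \<Longrightarrow> s \<in> \<sigma> \<Longrightarrow> \<beta> s = s"
    and shared: "\<And>s. s \<in> srt G \<Longrightarrow> \<beta> s \<in> srt H \<longleftrightarrow> s \<in> \<sigma> \<and> s \<in> srt H"
  shows "is_gluing (rename_g \<beta> (restrict_g (srt G \<inter> \<sigma> \<union> \<beta> -` srt H) K)) (restrict_g \<sigma> G) H fG fH eG eH"
proof -
  note KD = is_gluingD[OF K]
  let ?K = "rename_g \<beta> (restrict_g (srt G \<inter> \<sigma> \<union> \<beta> -` srt H) K)"
  have "shares_src G (rename_g \<beta> H) v w \<longleftrightarrow> shares_src (restrict_g \<sigma> G) H v w" for v w
  proof
    assume "shares_src G (rename_g \<beta> H) v w"
    then obtain s where "s \<in> srt G" "\<beta> s \<in> srt H" "v = src G s" "w = src H (\<beta> s)"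
      unfolding shares_src_def by auto
    then show "shares_src (restrict_g \<sigma> G) H v w"
      unfolding shares_src_def using shared fixed_on_\<sigma> by auto
  next
    assume "shares_src (restrict_g \<sigma> G) H v w"
    then obtain s where "s \<in> srt G" "s \<in> \<sigma>" "s \<in> srt H" "v = src G s" "w = src H s"
      unfolding shares_src_def by auto
    then show "shares_src G (rename_g \<beta> H) v w"
      unfolding shares_src_def using fixed_on_\<sigma> by auto
  qed
  then have "shares_src G (rename_g \<beta> H) = shares_src (restrict_g \<sigma> G) H" by blast
  moreover have "srt ?K = srt G \<inter> \<sigma> \<union> srt H"
  proof
    show "srt ?K \<subseteq> srt G \<inter> \<sigma> \<union> srt H"
    proof
      fix s assume "s \<in> srt ?K"
      then have "\<beta> s \<in> srt G \<inter> \<sigma> \<or> \<beta> (\<beta> s) \<in> srt H" by simp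
      then show "s \<in> srt G \<inter> \<sigma> \<union> srt H" using fixed_on_\<sigma> involution by (metis IntE UnI1 UnI2 IntI)
    qed
    show "srt G \<inter> \<sigma> \<union> srt H \<subseteq> srt ?K"
      using fixed_on_\<sigma> involution KD(7) by auto
  qed
  moreover have "src ?K s = fG (src G s)" if "s \<in> srt G \<inter> \<sigma>" for s
    using that fixed_on_\<sigma> KD(8) by simp
  moreover have "src ?K s = fH (src H s)" if "s \<in> srt H" for s
    using that involution KD(9)[of "\<beta> s"] by simp
  ultimately show ?thesis using K unfolding is_gluing_def by simp
qed

lemma shares_src_commute: "shares_src G H v w \<longleftrightarrow> shares_src H G w v"
  unfolding shares_src_def by blast

lemma is_gluing_src_eq_iff:
  assumes K: "is_gluing K G H fG fH eG eH" and "wf_graph ar G" "wf_graph ar H"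
    and s: "s \<in> srt K" and v: "v \<in> verts G"
  shows "fG v = src K s \<longleftrightarrow> s \<in> srt G \<and> v = src G s"
proof (cases "s \<in> srt G")
  case True
  then show ?thesis
    using is_gluingD(8)[OF K True] union_alongD(2)[OF is_gluingD(1)[OF K]] wf_graphD(7)[OF assms(2)] v
    by (auto dest: inj_onD)
next
  case False
  then have "s \<in> srt H" using s is_gluingD(7)[OF K] by auto
  then have "fG v \<noteq> src K s"
    using False v wf_graphD(7)[OF assms(2)] wf_graphD(6,7)[OF assms(3)] is_gluingD(9)[OF K]
      union_alongD(4)[OF is_gluingD(1)[OF K]]
    unfolding shares_src_def by (auto dest: inj_onD)
  then show ?thesis using False by simp
qed

lemma shares_src_is_gluing_iff:
  assumes K: "is_gluing K G H fG fH eG eH" and "wf_graph ar G" "wf_graph ar H" and "v \<in> verts G"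
  shows "shares_src X K x (fG v) \<longleftrightarrow> shares_src X G x v"
  unfolding shares_src_def using is_gluing_src_eq_iff[OF K assms(2,3) _ assms(4)] is_gluingD(7)[OF K] by auto

lemma is_gluing_assoc:
  assumes "wf_graph ar X" "wf_graph ar H" "wf_graph ar G"
    and K: "is_gluing K X P jX jP dX dP" and P: "is_gluing P H G kH kG cH cG"
    and A: "is_gluing A X H iX iH bX bH"
  shows "is_gluing K A G (copair_on (verts X) (verts H) iX iH jX (jP \<circ> kH)) (jP \<circ> kG)
           (copair_on (edges X) (edges H) bX bH dX (dP \<circ> cH)) (dP \<circ> cG)"
proof -
  define u where "u = copair_on (verts X) (verts H) iX iH jX (jP \<circ> kH)"
  define ue where "ue = copair_on (edges X) (edges H) bX bH dX (dP \<circ> cH)"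
  note KD = is_gluingD[OF K] and PD = is_gluingD[OF P] and AD = is_gluingD[OF A]
  note X = wf_graphD[OF assms(1)] and H = wf_graphD[OF assms(2)] and G = wf_graphD[OF assms(3)]
  have kH: "kH h \<in> verts P" if "h \<in> verts H" for h
    using that union_alongD(1)[OF PD(1)] by blast
  have shares_X_P_kH: "shares_src X P x (kH h) \<longleftrightarrow> shares_src X H x h" if "h \<in> verts H" for x h
    using shares_src_is_gluing_iff[OF P assms(2,3) that] .
  have "union_along (verts K) u (verts A) (jP \<circ> kG) (verts G) (shares_src A G)"
    unfolding u_def
  proof (rule union_along_assoc[OF KD(1) PD(1) AD(1)])
    show "shares_src A G (iX x) g \<longleftrightarrow> shares_src X P x (kG g)" if "x \<in> verts X" "g \<in> verts G" for x g
      using shares_src_is_gluing_iff[OF A assms(1,2) that(1)]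
        shares_src_is_gluing_iff[OF is_gluing_sym[OF P] assms(3,2) that(2)]
      by (metis shares_src_commute)
    show "shares_src A G (iH h) g \<longleftrightarrow> shares_src H G h g" if "h \<in> verts H" "g \<in> verts G" for h g
      using shares_src_is_gluing_iff[OF is_gluing_sym[OF A] assms(2,1) that(1)]
      by (metis shares_src_commute)
  qed (use shares_X_P_kH in blast)
  moreover have "union_along (edges K) ue (edges A) (dP \<circ> cG) (edges G) (\<lambda>_ _. False)"
    unfolding ue_def by (rule union_along_assoc[OF KD(2) PD(2) AD(2)]) simp_all
  moreover have u_iX: "u (iX x) = jX x" if "x \<in> verts X" for x
    unfolding u_def using copair_on_left[OF union_alongD(2)[OF AD(1)] that] .
  moreover have u_iH: "u (iH h) = jP (kH h)" if "h \<in> verts H" for h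
    unfolding u_def using copair_on_right[OF AD(1) that, of jX "jP \<circ> kH"] that
      union_alongD(4)[OF KD(1)] union_alongD(4)[OF AD(1)] kH shares_X_P_kH by simp
  moreover have "\<forall>e\<in>edges A. lab K (ue e) = lab A e \<and> att K (ue e) = map u (att A e)"
  proof
    fix e assume "e \<in> edges A"
    then consider e' where "e' \<in> edges X" "e = bX e'" | e' where "e' \<in> edges H" "e = bH e'"
      using union_alongD(1)[OF AD(2)] by blast
    then show "lab K (ue e) = lab A e \<and> att K (ue e) = map u (att A e)"
    proof cases
      case 1
      then have "ue e = dX e'"
        unfolding ue_def using copair_on_left[OF union_alongD(2)[OF AD(2)]] by simp
      then show ?thesis using 1 KD(3,4) AD(3,4) X(3) u_iX by (auto simp: subset_iff)
    next
      case 2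
      then have "ue e = dP (cH e')"
        unfolding ue_def using copair_on_right[OF AD(2), of e' dX "dP \<circ> cH"] by simp
      moreover have "cH e' \<in> edges P" using 2 union_alongD(1)[OF PD(2)] by blast
      ultimately show ?thesis using 2 KD(5,6) PD(3,4) AD(5,6) H(3) u_iH by (auto simp: subset_iff)
    qed
  qed
  moreover have "src K s = u (src A s)" if "s \<in> srt A" for s
  proof -
    from that consider "s \<in> srt X" | "s \<in> srt H" using AD(7) by blast
    then show ?thesis
      by cases (use KD(7,8,9) PD(7,8) AD(8,9) X(7) H(7) u_iX u_iH in auto)
  qed
  ultimately show ?thesis
    unfolding is_gluing_def u_def ue_def using KD(5,6,7,9) PD(5,6,7,9) AD(7) union_alongD(1)[OF PD(1)] union_alongD(1)[OF PD(2)]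
    by auto
qed

lemma iso_graph_par_g_assoc:
  assumes A: "is_gluing A X H iX iH bX bH" and "wf_graph ar X" "wf_graph ar H" "wf_graph ar G"
  shows "iso_graph (par_g A G) (par_g X (par_g H G))"
proof -
  have "wf_graph ar A" using wf_graph_is_gluing[OF A assms(2,3)] .
  moreover have "wf_graph ar (par_g H G)" using wf_graph_par_g[OF assms(3,4)] .
  ultimately show ?thesis
    using iso_graph_is_gluing[OF is_gluing_par_g is_gluing_assoc[OF assms(2-4) is_gluing_par_g is_gluing_par_g A]]
      assms by blast
qed

lemma restrict_g_superset_srt: "srt G \<subseteq> \<sigma> \<Longrightarrow> restrict_g \<sigma> G = G"
  unfolding restrict_g_def by (simp add: Int_absorb2)

lemma iso_graph_par_g_zero_g:
  assumes "wf_graph ar G"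
  shows "iso_graph (par_g G (zero_g {})) G"
proof -
  have "is_gluing G G (zero_g {}) id id id id"
    unfolding is_gluing_def union_along_def zero_g_def by simp
  then show ?thesis
    using iso_graph_is_gluing[OF is_gluing_par_g] assms wf_graph_zero_g[of "{}" ar] by blast
qed

section \<open>Context equivalence\<close>

abbreviation ctx_g :: "(nat \<Rightarrow> nat) \<Rightarrow> nat set \<Rightarrow> 'a hgraph \<Rightarrow> 'a hgraph \<Rightarrow> 'a hgraph" where
  "ctx_g \<alpha> \<tau> G X \<equiv> rename_g \<alpha> (restrict_g \<tau> (par_g X G))"

definition ctx_equiv :: "('a \<Rightarrow> nat) \<Rightarrow> 'a hgraph set set \<Rightarrow> 'a hgraph \<Rightarrow> 'a hgraph \<Rightarrow> bool" where
  "ctx_equiv ar L X Y \<longleftrightarrow> wf_graph ar X \<and> wf_graph ar Y \<and> srt X = srt Y \<and>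
     (\<forall>G \<alpha> \<tau>. wf_graph ar G \<longrightarrow> fin_perm \<alpha> \<longrightarrow> finite \<tau> \<longrightarrow>
        (cls ar (ctx_g \<alpha> \<tau> G X) \<in> L \<longleftrightarrow> cls ar (ctx_g \<alpha> \<tau> G Y) \<in> L))"

lemma ctx_equivD:
  assumes "ctx_equiv ar L X Y"
  shows "wf_graph ar X" "wf_graph ar Y" "srt X = srt Y"
  using assms unfolding ctx_equiv_def by simp_all

lemma ctx_equiv_refl: "wf_graph ar X \<Longrightarrow> ctx_equiv ar L X X"
  unfolding ctx_equiv_def by simp

lemma ctx_equiv_trans: "ctx_equiv ar L X Y \<Longrightarrow> ctx_equiv ar L Y Z \<Longrightarrow> ctx_equiv ar L X Z"
  unfolding ctx_equiv_def by simp

lemma wf_graph_ctx_g: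
  "wf_graph ar X \<Longrightarrow> wf_graph ar G \<Longrightarrow> fin_perm \<alpha> \<Longrightarrow> wf_graph ar (ctx_g \<alpha> \<tau> G X)"
  by (intro wf_graph_rename_g wf_graph_restrict_g wf_graph_par_g fin_perm_bij)

lemma ctx_equiv_map:
  assumes XY: "ctx_equiv ar L X Y"
    and wf_F: "\<And>Z. wf_graph ar Z \<Longrightarrow> wf_graph ar (F Z)"
    and srt_F: "\<And>Z. srt Z = srt X \<Longrightarrow> srt (F Z) = srt (F X)"
    and reduce: "\<And>G \<alpha> \<tau>. wf_graph ar G \<Longrightarrow> fin_perm \<alpha> \<Longrightarrow> finite \<tau> \<Longrightarrow>
       \<exists>G' \<alpha>' \<tau>'. wf_graph ar G' \<and> fin_perm \<alpha>' \<and> finite \<tau>' \<and>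
         (\<forall>Z. wf_graph ar Z \<longrightarrow> srt Z = srt X \<longrightarrow> iso_graph (ctx_g \<alpha> \<tau> G (F Z)) (ctx_g \<alpha>' \<tau>' G' Z))"
  shows "ctx_equiv ar L (F X) (F Y)"
  unfolding ctx_equiv_def
proof (intro conjI allI impI)
  note XY' = ctx_equivD[OF XY]
  show "wf_graph ar (F X)" "wf_graph ar (F Y)" using XY' wf_F by blast+
  show "srt (F X) = srt (F Y)" using srt_F[OF XY'(3)[symmetric]] by simp
  fix G :: "'a hgraph" and \<alpha> and \<tau> :: "nat set"
  assume G: "wf_graph ar G" and \<alpha>: "fin_perm \<alpha>" and \<tau>: "finite \<tau>"
  obtain G' \<alpha>' \<tau>' where G': "wf_graph ar G'" "fin_perm \<alpha>'" "finite \<tau>'"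
    and iso: "\<And>Z. wf_graph ar Z \<Longrightarrow> srt Z = srt X \<Longrightarrow> iso_graph (ctx_g \<alpha> \<tau> G (F Z)) (ctx_g \<alpha>' \<tau>' G' Z)"
    using reduce[OF G \<alpha> \<tau>] by blast
  have cls_eq: "cls ar (ctx_g \<alpha> \<tau> G (F Z)) = cls ar (ctx_g \<alpha>' \<tau>' G' Z)"
    if "wf_graph ar Z" "srt Z = srt X" for Z
    using cls_eq_if_iso_graph[OF iso[OF that] wf_graph_ctx_g[OF wf_F[OF that(1)] G \<alpha>]] .
  have "cls ar (ctx_g \<alpha>' \<tau>' G' X) \<in> L \<longleftrightarrow> cls ar (ctx_g \<alpha>' \<tau>' G' Y) \<in> L"
    using XY G' unfolding ctx_equiv_def by blast
  then show "cls ar (ctx_g \<alpha> \<tau> G (F X)) \<in> L \<longleftrightarrow> cls ar (ctx_g \<alpha> \<tau> G (F Y)) \<in> L"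
    by (simp only: cls_eq[OF XY'(1) refl] cls_eq[OF XY'(2) XY'(3)[symmetric]])
qed

lemma ctx_equiv_par_g_right:
  assumes "ctx_equiv ar L X Y" "wf_graph ar H"
  shows "ctx_equiv ar L (par_g X H) (par_g Y H)"
proof (rule ctx_equiv_map[OF assms(1)])
  fix G :: "'a hgraph" and \<alpha> and \<tau> :: "nat set" assume G: "wf_graph ar G" and "fin_perm \<alpha>" "finite \<tau>"
  have "iso_graph (ctx_g \<alpha> \<tau> G (par_g Z H)) (ctx_g \<alpha> \<tau> (par_g H G) Z)" if "wf_graph ar Z" for Z
    using iso_graph_par_g_assoc[OF is_gluing_par_g[OF that assms(2)] that assms(2) G]
    by (intro iso_graph_rename_g iso_graph_restrict_g)
  then show "\<exists>G' \<alpha>' \<tau>'. wf_graph ar G' \<and> fin_perm \<alpha>' \<and> finite \<tau>' \<and>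
      (\<forall>Z. wf_graph ar Z \<longrightarrow> srt Z = srt X \<longrightarrow> iso_graph (ctx_g \<alpha> \<tau> G (par_g Z H)) (ctx_g \<alpha>' \<tau>' G' Z))"
    using wf_graph_par_g[OF assms(2) G] \<open>fin_perm \<alpha>\<close> \<open>finite \<tau>\<close> by blast
qed (use assms(2) wf_graph_par_g in auto)

lemma ctx_equiv_par_g_left:
  assumes "ctx_equiv ar L X Y" "wf_graph ar H"
  shows "ctx_equiv ar L (par_g H X) (par_g H Y)"
proof (rule ctx_equiv_map[OF assms(1)])
  fix G :: "'a hgraph" and \<alpha> and \<tau> :: "nat set" assume G: "wf_graph ar G" and "fin_perm \<alpha>" "finite \<tau>"
  have "iso_graph (ctx_g \<alpha> \<tau> G (par_g H Z)) (ctx_g \<alpha> \<tau> (par_g H G) Z)" if "wf_graph ar Z" for Z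
    using iso_graph_par_g_assoc[OF is_gluing_sym[OF is_gluing_par_g[OF assms(2) that]] that assms(2) G]
    by (intro iso_graph_rename_g iso_graph_restrict_g)
  then show "\<exists>G' \<alpha>' \<tau>'. wf_graph ar G' \<and> fin_perm \<alpha>' \<and> finite \<tau>' \<and>
      (\<forall>Z. wf_graph ar Z \<longrightarrow> srt Z = srt X \<longrightarrow> iso_graph (ctx_g \<alpha> \<tau> G (par_g H Z)) (ctx_g \<alpha>' \<tau>' G' Z))"
    using wf_graph_par_g[OF assms(2) G] \<open>fin_perm \<alpha>\<close> \<open>finite \<tau>\<close> by blast
qed (use assms(2) wf_graph_par_g in auto)

lemma ctx_equiv_par_g:
  assumes "ctx_equiv ar L X Y" "ctx_equiv ar L X' Y'"
  shows "ctx_equiv ar L (par_g X X') (par_g Y Y')"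
  using ctx_equiv_trans ctx_equiv_par_g_right[OF assms(1)] ctx_equiv_par_g_left[OF assms(2)]
    ctx_equivD[OF assms(1)] ctx_equivD[OF assms(2)] by blast

lemma ctx_equiv_rename_g:
  assumes "ctx_equiv ar L X Y" "fin_perm \<beta>"
  shows "ctx_equiv ar L (rename_g \<beta> X) (rename_g \<beta> Y)"
proof (rule ctx_equiv_map[OF assms(1)])
  have \<beta>: "bij \<beta>" using fin_perm_bij[OF assms(2)] .
  fix G :: "'a hgraph" and \<alpha> and \<tau> :: "nat set"
  assume G: "wf_graph ar G" and \<alpha>: "fin_perm \<alpha>" and "finite \<tau>"
  define G' where "G' = rename_g (inv \<beta>) G"
  have G': "wf_graph ar G'"
    unfolding G'_def using wf_graph_rename_g[OF G bij_imp_bij_inv[OF \<beta>]] .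
  have "rename_g \<beta> G' = G"
    unfolding G'_def rename_rename_g using \<beta> by (simp add: bij_is_inj rename_id_g)
  then have "iso_graph (par_g (rename_g \<beta> Z) G) (rename_g \<beta> (par_g Z G'))" if "wf_graph ar Z" for Z
    using iso_graph_is_gluing[OF is_gluing_par_g is_gluing_rename_g[OF is_gluing_par_g \<beta>]]
      that G G' wf_graph_rename_g \<beta> by metis
  then have "iso_graph (ctx_g \<alpha> \<tau> G (rename_g \<beta> Z)) (ctx_g (\<beta> \<circ> \<alpha>) (\<beta> ` \<tau>) G' Z)"
    if "wf_graph ar Z" for Z
    using iso_graph_rename_g[OF iso_graph_restrict_g] rename_restrict_rename_g[OF \<beta>] that by metis
  then show "\<exists>G' \<alpha>' \<tau>'. wf_graph ar G' \<and> fin_perm \<alpha>' \<and> finite \<tau>' \<and>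
      (\<forall>Z. wf_graph ar Z \<longrightarrow> srt Z = srt X \<longrightarrow> iso_graph (ctx_g \<alpha> \<tau> G (rename_g \<beta> Z)) (ctx_g \<alpha>' \<tau>' G' Z))"
    using G' fin_perm_comp[OF assms(2) \<alpha>] \<open>finite \<tau>\<close> by blast
qed (use fin_perm_bij[OF assms(2)] wf_graph_rename_g in auto)

text \<open>Restricting Z to \<sigma> before gluing with G amounts to gluing Z with a copy of G whose labels
  outside \<sigma> are first swapped to fresh ones, then forgetting the fresh labels and swapping back.\<close>
lemma ctx_equiv_restrict_g:
  assumes "ctx_equiv ar L X Y"
  shows "ctx_equiv ar L (restrict_g \<sigma> X) (restrict_g \<sigma> Y)"
proof (rule ctx_equiv_map[OF assms])
  fix G :: "'a hgraph" and \<alpha> and \<tau> :: "nat set"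
  assume G: "wf_graph ar G" and \<alpha>: "fin_perm \<alpha>" and "finite \<tau>"
  have "finite (srt X \<union> srt G)"
    using wf_graphD(5)[OF ctx_equivD(1)[OF assms]] wf_graphD(5)[OF G] by blast
  then obtain \<beta> where "fin_perm \<beta>" and involution: "\<And>s. \<beta> (\<beta> s) = s"
    and fixed: "\<And>s. s \<in> (srt X \<union> srt G) - (srt G - \<sigma>) \<Longrightarrow> \<beta> s = s"
    and moves: "\<And>s. s \<in> srt G - \<sigma> \<Longrightarrow> \<beta> s \<notin> srt X \<union> srt G"
    using fin_perm_involution_avoiding[of "srt X \<union> srt G" "srt G - \<sigma>"] by blast
  have \<beta>: "bij \<beta>" using fin_perm_bij[OF \<open>fin_perm \<beta>\<close>] .
  define G' where "G' = rename_g \<beta> G"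
  have G': "wf_graph ar G'" unfolding G'_def using wf_graph_rename_g[OF G \<beta>] .
  define \<tau>\<^sub>0 where "\<tau>\<^sub>0 = srt X \<inter> \<sigma> \<union> \<beta> -` srt G"
  have "iso_graph (par_g (restrict_g \<sigma> Z) G) (rename_g \<beta> (restrict_g \<tau>\<^sub>0 (par_g Z G')))"
    if Z: "wf_graph ar Z" "srt Z = srt X" for Z
  proof -
    have "\<beta> s \<in> srt G \<longleftrightarrow> s \<in> \<sigma> \<and> s \<in> srt G" if "s \<in> srt Z" for s
      using that Z(2) fixed moves by (cases "s \<in> srt G - \<sigma>") auto
    then have "is_gluing (rename_g \<beta> (restrict_g \<tau>\<^sub>0 (par_g Z G'))) (restrict_g \<sigma> Z) G
        (\<lambda>v. 2 * v) (par_vmap Z G') (\<lambda>e. 2 * e) (\<lambda>e. 2 * e + 1)"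
      unfolding \<tau>\<^sub>0_def using is_gluing_restrict_g[OF is_gluing_par_g[OF Z(1) G'[unfolded G'_def]] involution]
        fixed Z(2) unfolding G'_def by auto
    then show ?thesis
      using iso_graph_is_gluing[OF is_gluing_par_g[OF wf_graph_restrict_g[OF Z(1)] G]] Z(1) G
        wf_graph_restrict_g by blast
  qed
  then have "iso_graph (ctx_g \<alpha> \<tau> G (restrict_g \<sigma> Z)) (ctx_g (\<beta> \<circ> \<alpha>) (\<tau>\<^sub>0 \<inter> \<beta> ` \<tau>) G' Z)"
    if "wf_graph ar Z" "srt Z = srt X" for Z
    using iso_graph_rename_g[OF iso_graph_restrict_g] rename_restrict_rename_g[OF \<beta>] restrict_restrict_g
      that by metis
  then show "\<exists>G' \<alpha>' \<tau>'. wf_graph ar G' \<and> fin_perm \<alpha>' \<and> finite \<tau>' \<and>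
      (\<forall>Z. wf_graph ar Z \<longrightarrow> srt Z = srt X \<longrightarrow> iso_graph (ctx_g \<alpha> \<tau> G (restrict_g \<sigma> Z)) (ctx_g \<alpha>' \<tau>' G' Z))"
    using G' fin_perm_comp[OF \<open>fin_perm \<beta>\<close> \<alpha>] \<open>finite \<tau>\<close> by blast
qed (auto intro: wf_graph_restrict_g)

lemma ctx_equiv_cls_mem_iff:
  assumes "ctx_equiv ar L X Y"
  shows "cls ar X \<in> L \<longleftrightarrow> cls ar Y \<in> L"
proof -
  note XY = ctx_equivD[OF assms]
  have "cls ar (ctx_g id (srt X) (zero_g {}) Z) = cls ar Z" if "wf_graph ar Z" "srt Z = srt X" for Z
  proof -
    have "ctx_g id (srt X) (zero_g {}) Z = par_g Z (zero_g {})"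
      using that(2) by (simp add: rename_id_g restrict_g_superset_srt zero_g_def)
    then show ?thesis
      using cls_eq_if_iso_graph[OF iso_graph_par_g_zero_g[OF that(1)]
          wf_graph_par_g[OF that(1) wf_graph_zero_g[OF finite.emptyI]]] by simp
  qed
  moreover have "cls ar (ctx_g id (srt X) (zero_g {}) X) \<in> L \<longleftrightarrow> cls ar (ctx_g id (srt X) (zero_g {}) Y) \<in> L"
    using assms wf_graph_zero_g fin_perm_id wf_graphD(5)[OF XY(1)] unfolding ctx_equiv_def by blast
  ultimately show ?thesis using XY by simp
qed

lemma ctx_equiv_eval_term:
  assumes "wf_term ar t" and "\<And>i. ctx_equiv ar L (\<rho> i) (\<rho>' i)"
  shows "ctx_equiv ar L (eval_term \<rho> t) (eval_term \<rho>' t)"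
  using assms(1)
proof (induction t)
  case (Var i)
  then show ?case using assms(2) by simp
next
  case (Zero \<tau>)
  then show ?case by (simp add: wf_graph_zero_g ctx_equiv_refl)
next
  case (Edge a ss)
  then show ?case by (simp add: wf_graph_edge_g ctx_equiv_refl)
next
  case (Restrict \<tau> t)
  then show ?case by (simp add: ctx_equiv_restrict_g)
next
  case (Rename \<alpha> t)
  then show ?case by (simp add: ctx_equiv_rename_g)
next
  case (Par t u)
  then show ?case by (simp add: ctx_equiv_par_g)
qed

lemma synt_cong_if_ctx_equiv:
  assumes "ctx_equiv ar L G\<^sub>1 G\<^sub>2"
  shows "synt_cong ar L G\<^sub>1 G\<^sub>2"
  unfolding synt_cong_def
proof (intro conjI allI impI)
  show "srt G\<^sub>1 = srt G\<^sub>2" using ctx_equivD(3)[OF assms] .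
  fix t and \<rho> :: "nat \<Rightarrow> 'a hgraph" assume "wf_term ar t" and "\<forall>i. wf_graph ar (\<rho> i)"
  then have "ctx_equiv ar L ((\<rho>(0 := G\<^sub>1)) i) ((\<rho>(0 := G\<^sub>2)) i)" for i
    by (simp add: assms ctx_equiv_refl)
  then show "cls ar (eval_term (\<rho>(0 := G\<^sub>1)) t) \<in> L \<longleftrightarrow> cls ar (eval_term (\<rho>(0 := G\<^sub>2)) t) \<in> L"
    using ctx_equiv_cls_mem_iff ctx_equiv_eval_term \<open>wf_term ar t\<close> by blast
qed

lemma synt_cong_ctx_g:
  assumes "synt_cong ar L G\<^sub>1 G\<^sub>2" "wf_graph ar G" "fin_perm \<alpha>" "finite \<tau>"
  shows "cls ar (ctx_g \<alpha> \<tau> G G\<^sub>1) \<in> L \<longleftrightarrow> cls ar (ctx_g \<alpha> \<tau> G G\<^sub>2) \<in> L"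
proof -
  define t :: "'a hrterm" where "t = Rename \<alpha> (Restrict \<tau> (Par (Var 0) (Var 1)))"
  define \<rho> where "\<rho> = (\<lambda>_ :: nat. G)"
  have "wf_term ar t" "\<forall>i. wf_graph ar (\<rho> i)" unfolding t_def \<rho>_def using assms(2-4) by simp_all
  then have "cls ar (eval_term (\<rho>(0 := G\<^sub>1)) t) \<in> L \<longleftrightarrow> cls ar (eval_term (\<rho>(0 := G\<^sub>2)) t) \<in> L"
    using assms(1) unfolding synt_cong_def by blast
  then show ?thesis unfolding t_def \<rho>_def by simp
qed

theorem lemma7p1:
  fixes ar :: "'a \<Rightarrow> nat" and L :: "'a hgraph set set" and G1 G2 :: "'a hgraph"
  assumes "wf_graph ar G1" and "wf_graph ar G2"
  shows "synt_cong ar L G1 G2 \<longleftrightarrow>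
           srt G1 = srt G2 \<and>
           (\<forall>G \<alpha> \<tau>. wf_graph ar G \<longrightarrow> fin_perm \<alpha> \<longrightarrow> finite \<tau> \<longrightarrow>
              (cls ar (rename_g \<alpha> (restrict_g \<tau> (par_g G1 G))) \<in> L \<longleftrightarrow>
               cls ar (rename_g \<alpha> (restrict_g \<tau> (par_g G2 G))) \<in> L))"
proof
  assume "synt_cong ar L G1 G2"
  then show "srt G1 = srt G2 \<and>
           (\<forall>G \<alpha> \<tau>. wf_graph ar G \<longrightarrow> fin_perm \<alpha> \<longrightarrow> finite \<tau> \<longrightarrow>
              (cls ar (rename_g \<alpha> (restrict_g \<tau> (par_g G1 G))) \<in> L \<longleftrightarrow>
               cls ar (rename_g \<alpha> (restrict_g \<tau> (par_g G2 G))) \<in> L))"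
    using synt_cong_ctx_g unfolding synt_cong_def by blast
next
  assume "srt G1 = srt G2 \<and>
           (\<forall>G \<alpha> \<tau>. wf_graph ar G \<longrightarrow> fin_perm \<alpha> \<longrightarrow> finite \<tau> \<longrightarrow>
              (cls ar (rename_g \<alpha> (restrict_g \<tau> (par_g G1 G))) \<in> L \<longleftrightarrow>
               cls ar (rename_g \<alpha> (restrict_g \<tau> (par_g G2 G))) \<in> L))"
  then have "ctx_equiv ar L G1 G2" using assms unfolding ctx_equiv_def by blast
  then show "synt_cong ar L G1 G2" by (rule synt_cong_if_ctx_equiv)
qed

end
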